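(* Let $G$ be a simple graph of order $n \ge 4$. If $$\mu(\overline{G}) < \sqrt{\frac{(n-2)^2}{n}},$$ then $G$ is Hamilton-connected.
   Context: $\overline{G}$ denotes the complement of $G$. For a simple graph $H$, $\mu(H)$ denotes the largest eigenvalue (spectral radius) of the adjacency matrix of $H$. A graph is Hamilton-connected if every two distinct vertices are joined by a Hamiltonian path (a path containing all vertices). *)

theory Defs
  imports "Jordan_Normal_Form.Char_Poly"
begin

definition simple_graph :: "nat \<Rightarrow> (nat \<Rightarrow> nat \<Rightarrow> bool) \<Rightarrow> bool" where
  "simple_graph n E \<longleftrightarrow>
     (\<forall>u v. E u v \<longrightarrow> u < n \<and> v < n) \<and>
     (\<forall>u v. E u v \<longrightarrow> E v u) \<and> (\<forall>u. \<not> E u u)"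

definition complement :: "nat \<Rightarrow> (nat \<Rightarrow> nat \<Rightarrow> bool) \<Rightarrow> nat \<Rightarrow> nat \<Rightarrow> bool" where
  "complement n E u v \<longleftrightarrow> u < n \<and> v < n \<and> u \<noteq> v \<and> \<not> E u v"

definition adjacency_matrix :: "nat \<Rightarrow> (nat \<Rightarrow> nat \<Rightarrow> bool) \<Rightarrow> real mat" where
  "adjacency_matrix n E = mat n n (\<lambda>(i, j). if E i j then 1 else 0)"

definition spectral_radius_graph :: "nat \<Rightarrow> (nat \<Rightarrow> nat \<Rightarrow> bool) \<Rightarrow> real" where
  "spectral_radius_graph n E = Max {k. eigenvalue (adjacency_matrix n E) k}"

definition hamiltonian_path :: "nat \<Rightarrow> (nat \<Rightarrow> nat \<Rightarrow> bool) \<Rightarrow> nat \<Rightarrow> nat \<Rightarrow> nat list \<Rightarrow> bool" where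
  "hamiltonian_path n E u v p \<longleftrightarrow>
     p \<noteq> [] \<and> distinct p \<and> set p = {0..<n} \<and> hd p = u \<and> last p = v \<and>
     (\<forall>i. Suc i < length p \<longrightarrow> E (p ! i) (p ! Suc i))"

definition hamilton_connected :: "nat \<Rightarrow> (nat \<Rightarrow> nat \<Rightarrow> bool) \<Rightarrow> bool" where
  "hamilton_connected n E \<longleftrightarrow>
     (\<forall>u v. u < n \<and> v < n \<and> u \<noteq> v \<longrightarrow> (\<exists>p. hamiltonian_path n E u v p))"

end

theory Submission
  imports Defs "Jordan_Normal_Form.Spectral_Radius" "HOL-Analysis.Function_Topology"
    "HOL-Combinatorics.Permutations"
begin

text \<open>If \<open>G\<close> is not Hamilton-connected, neither is its Bondy-Chvatal \<open>(n+1)\<close>-closure \<open>H\<close>, since a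
  Hamiltonian path through a new edge \<open>uv\<close> with \<open>d(u) + d(v) > n\<close> can be rerouted by a Posa rotation.
  So \<open>H\<close> is not complete, and every edge \<open>xy\<close> of its complement satisfies \<open>d(x) + d(y) \<ge> n - 2\<close>.
  Testing the adjacency matrix \<open>A\<close> of this complement, a subgraph of the complement of \<open>G\<close>, on the
  indicator vector \<open>x\<close> of its non-isolated vertices gives \<open>Ax = d\<close>, and double counting yields
  \<open>n |Ax|\<^sup>2 \<ge> (n - 2)\<^sup>2 |x|\<^sup>2\<close>. On the other hand, for a symmetric nonnegative matrix the maximum of the
  Rayleigh quotient is an eigenvalue \<open>M\<close> with \<open>|Ax| \<le> M |x|\<close>, and monotonicity in the matrix
  entries carries this over to the subgraph, so \<open>\<mu>(G\<^sup>c) \<ge> (n - 2) / sqrt n\<close>.\<close>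

definition quad_form :: "nat \<Rightarrow> (nat \<Rightarrow> nat \<Rightarrow> real) \<Rightarrow> (nat \<Rightarrow> real) \<Rightarrow> real" where
  "quad_form n a x = (\<Sum>i<n. \<Sum>j<n. a i j * x i * x j)"

definition sq_norm :: "nat \<Rightarrow> (nat \<Rightarrow> real) \<Rightarrow> real" where
  "sq_norm n x = (\<Sum>i<n. (x i)\<^sup>2)"

definition dot_prod :: "nat \<Rightarrow> (nat \<Rightarrow> real) \<Rightarrow> (nat \<Rightarrow> real) \<Rightarrow> real" where
  "dot_prod n x y = (\<Sum>i<n. x i * y i)"

definition mat_apply :: "nat \<Rightarrow> (nat \<Rightarrow> nat \<Rightarrow> real) \<Rightarrow> (nat \<Rightarrow> real) \<Rightarrow> nat \<Rightarrow> real" where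
  "mat_apply n a x i = (\<Sum>j<n. a i j * x j)"

lemma sq_norm_nonneg: "0 \<le> sq_norm n x"
  unfolding sq_norm_def by (intro sum_nonneg) auto

lemma sq_norm_eq_0_iff: "sq_norm n x = 0 \<longleftrightarrow> (\<forall>i<n. x i = 0)"
  unfolding sq_norm_def by (auto simp: sum_nonneg_eq_0_iff)

lemma quad_form_cong: "(\<And>i. i < n \<Longrightarrow> x i = y i) \<Longrightarrow> quad_form n a x = quad_form n a y"
  unfolding quad_form_def by (intro sum.cong refl) auto

lemma sq_norm_cong: "(\<And>i. i < n \<Longrightarrow> x i = y i) \<Longrightarrow> sq_norm n x = sq_norm n y"
  unfolding sq_norm_def by (intro sum.cong refl) auto

lemma sq_norm_abs [simp]: "sq_norm n (\<lambda>i. \<bar>x i\<bar>) = sq_norm n x"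
  unfolding sq_norm_def by simp

lemma quad_form_scale: "quad_form n a (\<lambda>i. c * x i) = c\<^sup>2 * quad_form n a x"
  unfolding quad_form_def power2_eq_square by (simp add: sum_distrib_left algebra_simps)

lemma sq_norm_scale: "sq_norm n (\<lambda>i. c * x i) = c\<^sup>2 * sq_norm n x"
  unfolding sq_norm_def by (simp add: sum_distrib_left power_mult_distrib)

lemma dot_prod_mat_apply_commute:
  assumes "\<And>i j. a i j = a j i"
  shows "dot_prod n x (mat_apply n a y) = dot_prod n y (mat_apply n a x)"
  unfolding dot_prod_def mat_apply_def sum_distrib_left
  by (subst sum.swap) (simp add: assms[of _ "_::nat"] algebra_simps)

lemma quad_form_add:
  assumes "\<And>i j. a i j = a j i"
  shows "quad_form n a (\<lambda>i. x i + t * y i)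
    = quad_form n a x + 2 * t * dot_prod n y (mat_apply n a x) + t\<^sup>2 * quad_form n a y"
proof -
  define c where "c i j = a i j * x i * y j + a i j * y i * x j" for i j
  have expand: "a i j * (x i + t * y i) * (x j + t * y j)
      = a i j * x i * x j + t * c i j + t\<^sup>2 * (a i j * y i * y j)"
    for i j by (simp add: c_def algebra_simps power2_eq_square)
  have "(\<Sum>i<n. \<Sum>j<n. c i j) = dot_prod n x (mat_apply n a y) + dot_prod n y (mat_apply n a x)"
    unfolding c_def dot_prod_def mat_apply_def sum_distrib_left by (simp add: sum.distrib algebra_simps)
  also have "\<dots> = 2 * dot_prod n y (mat_apply n a x)"
    using dot_prod_mat_apply_commute[OF assms, where x = x and y = y] by simp
  moreover have "quad_form n a (\<lambda>i. x i + t * y i)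
      = quad_form n a x + t * (\<Sum>i<n. \<Sum>j<n. c i j) + t\<^sup>2 * quad_form n a y"
    unfolding quad_form_def expand by (simp add: sum.distrib sum_distrib_left)
  ultimately show ?thesis by simp
qed

lemma sq_norm_add:
  "sq_norm n (\<lambda>i. x i + t * y i) = sq_norm n x + 2 * t * dot_prod n x y + t\<^sup>2 * sq_norm n y"
proof -
  have "(x i + t * y i)\<^sup>2 = (x i)\<^sup>2 + 2 * t * (x i * y i) + t\<^sup>2 * (y i)\<^sup>2" for i
    by (simp add: algebra_simps power2_eq_square)
  then show ?thesis unfolding sq_norm_def dot_prod_def by (simp add: sum.distrib sum_distrib_left)
qed

lemma sq_norm_unit_vec: "i < n \<Longrightarrow> sq_norm n (\<lambda>j. if j = i then 1 else 0) = 1"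
proof -
  have "(if j = i then 1 else 0)\<^sup>2 = (if j = i then 1 else (0::real))" for j by simp
  then show "i < n \<Longrightarrow> ?thesis" unfolding sq_norm_def by simp
qed

lemma quad_form_le_by_homogeneity:
  assumes "\<And>y. sq_norm n y = 1 \<Longrightarrow> quad_form n a y \<le> M"
  shows "quad_form n a x \<le> M * sq_norm n x"
proof (cases "sq_norm n x = 0")
  case True
  then have "quad_form n a x = quad_form n a (\<lambda>_. 0)"
    by (intro quad_form_cong) (simp add: sq_norm_eq_0_iff)
  then show ?thesis using True by (simp add: quad_form_def)
next
  case False
  then have pos: "0 < sq_norm n x" using sq_norm_nonneg[of n x] by simp
  define c where "c = 1 / sqrt (sq_norm n x)"
  have c2: "c\<^sup>2 = 1 / sq_norm n x" using pos by (simp add: c_def power_divide)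
  have "sq_norm n (\<lambda>i. c * x i) = 1" using pos by (simp add: sq_norm_scale c2)
  then have "c\<^sup>2 * quad_form n a x \<le> M" using assms quad_form_scale by metis
  then show ?thesis using pos by (simp add: c2 divide_le_eq mult.commute)
qed

lemma quad_form_attains_max_on_sphere:
  assumes "0 < n"
  shows "\<exists>x0. sq_norm n x0 = 1 \<and> (\<forall>y. sq_norm n y = 1 \<longrightarrow> quad_form n a y \<le> quad_form n a x0)"
proof -
  define box where "box = Pi UNIV (\<lambda>i. if i < n then {-1..(1::real)} else {0})"
  define K where "K = box \<inter> {x. sq_norm n x = 1}"
  have "compact box"
  proof -
    have "compactin (product_topology (\<lambda>_. euclideanreal) UNIV)
        (PiE UNIV (\<lambda>i. if i < n then {-1..(1::real)} else {0}))"
      by (subst compactin_PiE) auto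
    then show ?thesis unfolding box_def euclidean_product_topology PiE_UNIV_domain by simp
  qed
  moreover have "closed {x. sq_norm n x = 1}"
    unfolding sq_norm_def
    by (intro closed_Collect_eq continuous_intros continuous_on_product_coordinates)
  ultimately have "compact K" unfolding K_def by (rule compact_Int_closed)
  have truncate_in_K: "(\<lambda>i. if i < n then y i else 0) \<in> K" if "sq_norm n y = 1" for y
  proof -
    have "\<bar>y i\<bar> \<le> 1" if "i < n" for i
    proof -
      have "(y i)\<^sup>2 \<le> sq_norm n y" unfolding sq_norm_def using \<open>i < n\<close> by (intro member_le_sum) auto
      then show ?thesis using \<open>sq_norm n y = 1\<close> by (simp add: abs_square_le_1)
    qed
    moreover have "sq_norm n (\<lambda>i. if i < n then y i else 0) = 1"
      using \<open>sq_norm n y = 1\<close> by (subst sq_norm_cong[where y = y]) auto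
    ultimately show ?thesis unfolding K_def box_def by (auto simp: abs_le_iff)
  qed
  have "sq_norm n (\<lambda>i. if i = 0 then 1 else 0) = 1" using assms by (rule sq_norm_unit_vec)
  then have "K \<noteq> {}" using truncate_in_K by blast
  moreover have "continuous_on UNIV (quad_form n a)"
    unfolding quad_form_def by (intro continuous_intros continuous_on_product_coordinates)
  then have "continuous_on K (quad_form n a)" by (rule continuous_on_subset) simp
  ultimately obtain x0 where x0: "x0 \<in> K" "\<And>y. y \<in> K \<Longrightarrow> quad_form n a y \<le> quad_form n a x0"
    using continuous_attains_sup[OF \<open>compact K\<close>] by blast
  have "quad_form n a y \<le> quad_form n a x0" if "sq_norm n y = 1" for y
    using x0(2)[OF truncate_in_K[OF that]] by (subst (asm) quad_form_cong[where y = y]) auto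
  then show ?thesis using x0(1) unfolding K_def by blast
qed

lemma linear_coeff_eq_0_if_nonpos:
  fixes c k :: real
  assumes "\<And>t. 2 * t * c + t\<^sup>2 * k \<le> 0"
  shows "c = 0"
proof (rule ccontr)
  assume "c \<noteq> 0"
  define l where "l = \<bar>k\<bar> + 1"
  have "0 < l" "0 < 2 * l + k" unfolding l_def by auto
  moreover have "2 * (c / l) * c + (c / l)\<^sup>2 * k = (2 * l + k) * (c\<^sup>2 / l\<^sup>2)"
    using \<open>0 < l\<close> by (simp add: power2_eq_square field_simps)
  ultimately have "0 < 2 * (c / l) * c + (c / l)\<^sup>2 * k" using \<open>c \<noteq> 0\<close> by simp
  then show False using assms[of "c / l"] by simp
qed

text \<open>Perturbing the maximiser along a coordinate direction cannot increase the Rayleigh quotient,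
  so the first-order term vanishes.\<close>
lemma quad_form_maximiser_eigenvector:
  assumes sym: "\<And>i j. a i j = a j i"
    and x0: "sq_norm n x0 = 1" "\<And>x. quad_form n a x \<le> quad_form n a x0 * sq_norm n x"
    and "i < n"
  shows "mat_apply n a x0 i = quad_form n a x0 * x0 i"
proof -
  define e where "e = (\<lambda>j. if j = i then (1::real) else 0)"
  define M where "M = quad_form n a x0"
  have pick: "(\<Sum>j<n. f j * e j) = f i" for f :: "nat \<Rightarrow> real"
    using \<open>i < n\<close> by (simp add: e_def if_distrib sum.delta cong: if_cong)
  have "dot_prod n e (mat_apply n a x0) = mat_apply n a x0 i"
    unfolding dot_prod_def using pick[of "mat_apply n a x0"] by (simp add: mult.commute)
  moreover have "quad_form n a e = a i i"
  proof -
    have "quad_form n a e = (\<Sum>k<n. (\<Sum>j<n. a k j * e j) * e k)"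
      unfolding quad_form_def sum_distrib_right by (simp add: mult_ac)
    then show ?thesis by (simp only: pick)
  qed
  moreover have "sq_norm n e = 1" unfolding e_def using \<open>i < n\<close> by (rule sq_norm_unit_vec)
  moreover have "dot_prod n x0 e = x0 i" unfolding dot_prod_def by (rule pick)
  moreover have "quad_form n a (\<lambda>j. x0 j + t * e j) \<le> M * sq_norm n (\<lambda>j. x0 j + t * e j)" for t
    unfolding M_def by (rule x0(2))
  ultimately have "2 * t * (mat_apply n a x0 i - M * x0 i) + t\<^sup>2 * (a i i - M) \<le> 0" for t
    using x0(1) unfolding quad_form_add[OF sym] sq_norm_add M_def by (simp add: algebra_simps)
  then show ?thesis using linear_coeff_eq_0_if_nonpos unfolding M_def by fastforce
qed

lemma neg_quad_form_le_abs:
  assumes "\<And>i j. 0 \<le> a i j"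
  shows "- quad_form n a y \<le> quad_form n a (\<lambda>i. \<bar>y i\<bar>)"
proof -
  have "- (a i j * y i * y j) \<le> a i j * \<bar>y i\<bar> * \<bar>y j\<bar>" for i j
  proof -
    have "a i j * - (y i * y j) \<le> a i j * (\<bar>y i\<bar> * \<bar>y j\<bar>)"
      using assms by (intro mult_left_mono) (auto simp flip: abs_mult)
    then show ?thesis by (simp add: algebra_simps)
  qed
  then have "(\<Sum>i<n. \<Sum>j<n. - (a i j * y i * y j)) \<le> quad_form n a (\<lambda>i. \<bar>y i\<bar>)"
    unfolding quad_form_def by (intro sum_mono)
  then show ?thesis unfolding quad_form_def by (simp add: sum_negf)
qed

text \<open>Comparing \<open>x + t A x\<close> with \<open>x - t A x\<close>, whose quadratic forms are bounded above by the
  Rayleigh bound and below via \<open>neg_quad_form_le_abs\<close>, gives \<open>4 t |Ax|\<^sup>2 \<le> 2 M (|x|\<^sup>2 + t\<^sup>2 |Ax|\<^sup>2)\<close>;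
  take \<open>t = 1/M\<close>.\<close>
lemma sq_norm_mat_apply_le:
  assumes sym: "\<And>i j. a i j = a j i" and nonneg: "\<And>i j. 0 \<le> a i j"
    and bound: "\<And>x. quad_form n a x \<le> M * sq_norm n x" and "0 \<le> M"
  shows "sq_norm n (mat_apply n a x) \<le> M\<^sup>2 * sq_norm n x"
proof -
  define z where "z = mat_apply n a x"
  define Z where "Z = sq_norm n z"
  have dz: "dot_prod n z (mat_apply n a x) = Z"
    unfolding Z_def z_def dot_prod_def sq_norm_def power2_eq_square ..
  have key: "4 * t * Z \<le> 2 * M * (sq_norm n x + t\<^sup>2 * Z)" for t
  proof -
    have "quad_form n a (\<lambda>i. x i + t * z i) \<le> M * sq_norm n (\<lambda>i. x i + t * z i)"
      by (rule bound)
    moreover have "- quad_form n a (\<lambda>i. x i + (- t) * z i) \<le> M * sq_norm n (\<lambda>i. x i + (- t) * z i)"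
      using order_trans[OF neg_quad_form_le_abs[OF nonneg] bound] by simp
    ultimately show ?thesis
      unfolding quad_form_add[OF sym] sq_norm_add dz Z_def by (simp add: algebra_simps power2_eq_square)
  qed
  show ?thesis
  proof (cases "M = 0")
    case True
    then show ?thesis using key[of 1] sq_norm_nonneg[of n z] by (simp add: Z_def z_def)
  next
    case False
    then have "0 < M" using \<open>0 \<le> M\<close> by simp
    have "4 * (1 / M) * Z \<le> 2 * M * (sq_norm n x + (1 / M)\<^sup>2 * Z)" by (rule key)
    then have "4 * Z / M \<le> 2 * M * sq_norm n x + 2 * Z / M"
      using \<open>0 < M\<close> by (simp add: algebra_simps power2_eq_square)
    then have "2 * Z / M \<le> 2 * M * sq_norm n x" by simp
    then have "Z \<le> M * M * sq_norm n x"
      using \<open>0 < M\<close> by (simp add: divide_le_eq algebra_simps)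
    then show ?thesis unfolding Z_def z_def by (simp add: power2_eq_square)
  qed
qed

definition adj_weight :: "(nat \<Rightarrow> nat \<Rightarrow> bool) \<Rightarrow> nat \<Rightarrow> nat \<Rightarrow> real" where
  "adj_weight F i j = (if F i j then 1 else 0)"

lemma eigenvalue_adjacency_matrixI:
  assumes "sq_norm n x \<noteq> 0" and eigen: "\<And>i. i < n \<Longrightarrow> mat_apply n (adj_weight F) x i = M * x i"
  shows "eigenvalue (adjacency_matrix n F) M"
proof -
  define A where "A = adjacency_matrix n F"
  have A: "A \<in> carrier_mat n n" unfolding A_def adjacency_matrix_def by auto
  have "vec n x \<noteq> 0\<^sub>v n"
    using assms(1) by (auto simp: sq_norm_eq_0_iff vec_eq_iff)
  moreover have "A *\<^sub>v vec n x = M \<cdot>\<^sub>v vec n x"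
  proof (rule eq_vecI)
    fix i assume "i < dim_vec (M \<cdot>\<^sub>v vec n x)"
    then have "i < n" by simp
    then have "(A *\<^sub>v vec n x) $ i = mat_apply n (adj_weight F) x i"
      using A by (simp add: A_def adjacency_matrix_def mat_apply_def adj_weight_def
          scalar_prod_def lessThan_atLeast0)
    then show "(A *\<^sub>v vec n x) $ i = (M \<cdot>\<^sub>v vec n x) $ i" using eigen \<open>i < n\<close> by simp
  qed (use A in simp)
  ultimately show ?thesis
    unfolding A_def[symmetric] eigenvalue_def eigenvector_def using A vec_carrier by blast
qed

lemma eigenvalue_le_spectral_radius_graph:
  assumes "eigenvalue (adjacency_matrix n F) M"
  shows "M \<le> spectral_radius_graph n F"
proof -
  have "adjacency_matrix n F \<in> carrier_mat n n" unfolding adjacency_matrix_def by auto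
  then have "finite {k. eigenvalue (adjacency_matrix n F) k}"
    using card_finite_spectrum(1) unfolding spectrum_def by blast
  then show ?thesis using assms unfolding spectral_radius_graph_def by (simp add: Max_ge)
qed

lemma adjacency_rayleigh_eigenvalue:
  assumes sym: "\<And>x y. F x y \<Longrightarrow> F y x" and "0 < n"
  obtains M where "0 \<le> M" "eigenvalue (adjacency_matrix n F) M"
    "\<And>x. sq_norm n (mat_apply n (adj_weight F) x) \<le> M\<^sup>2 * sq_norm n x"
proof -
  define a where "a = adj_weight F"
  have asym: "a i j = a j i" for i j unfolding a_def adj_weight_def using sym by auto
  have anonneg: "0 \<le> a i j" for i j unfolding a_def adj_weight_def by auto
  obtain x0 where x0: "sq_norm n x0 = 1"
    "\<And>y. sq_norm n y = 1 \<Longrightarrow> quad_form n a y \<le> quad_form n a x0"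
    using quad_form_attains_max_on_sphere[OF \<open>0 < n\<close>] by blast
  define M where "M = quad_form n a x0"
  have bound: "quad_form n a x \<le> M * sq_norm n x" for x
    unfolding M_def by (rule quad_form_le_by_homogeneity) (rule x0(2))
  have "- M \<le> quad_form n a (\<lambda>i. \<bar>x0 i\<bar>)"
    unfolding M_def by (rule neg_quad_form_le_abs[OF anonneg])
  also have "\<dots> \<le> M" using bound[of "\<lambda>i. \<bar>x0 i\<bar>"] x0(1) by simp
  finally have "0 \<le> M" by simp
  moreover have "eigenvalue (adjacency_matrix n F) M"
  proof (rule eigenvalue_adjacency_matrixI)
    show "sq_norm n x0 \<noteq> 0" using x0(1) by simp
    show "mat_apply n (adj_weight F) x0 i = M * x0 i" if "i < n" for i
      using quad_form_maximiser_eigenvector[OF asym x0(1) bound[unfolded M_def] that]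
      unfolding M_def a_def .
  qed
  moreover have "sq_norm n (mat_apply n (adj_weight F) x) \<le> M\<^sup>2 * sq_norm n x" for x
    using sq_norm_mat_apply_le[OF asym anonneg bound \<open>0 \<le> M\<close>] unfolding a_def .
  ultimately show ?thesis by (rule that)
qed

lemma sq_norm_adjacency_le_spectral_radius:
  assumes "\<And>x y. F x y \<Longrightarrow> F y x" and "0 < n"
  shows "0 \<le> spectral_radius_graph n F"
    and "sq_norm n (mat_apply n (adj_weight F) x) \<le> (spectral_radius_graph n F)\<^sup>2 * sq_norm n x"
proof -
  obtain M where M: "0 \<le> M" "eigenvalue (adjacency_matrix n F) M"
      "\<And>x. sq_norm n (mat_apply n (adj_weight F) x) \<le> M\<^sup>2 * sq_norm n x"
    using adjacency_rayleigh_eigenvalue[of F n, OF assms] by blast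
  have "M \<le> spectral_radius_graph n F" using M(2) by (rule eigenvalue_le_spectral_radius_graph)
  then show "0 \<le> spectral_radius_graph n F" using M(1) by simp
  have "M\<^sup>2 * sq_norm n x \<le> (spectral_radius_graph n F)\<^sup>2 * sq_norm n x"
    using M(1) \<open>M \<le> spectral_radius_graph n F\<close> by (intro mult_right_mono power_mono sq_norm_nonneg)
  then show "sq_norm n (mat_apply n (adj_weight F) x) \<le> (spectral_radius_graph n F)\<^sup>2 * sq_norm n x"
    using M(3)[of x] by linarith
qed

lemma sq_norm_mat_apply_adj_weight_mono:
  assumes "\<And>i. 0 \<le> x i" and "\<And>i j. G i j \<Longrightarrow> F i j"
  shows "sq_norm n (mat_apply n (adj_weight G) x) \<le> sq_norm n (mat_apply n (adj_weight F) x)"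
  unfolding sq_norm_def
proof (intro sum_mono power_mono)
  fix i
  show "0 \<le> mat_apply n (adj_weight G) x i"
    unfolding mat_apply_def adj_weight_def using assms(1) by (intro sum_nonneg) simp
  show "mat_apply n (adj_weight G) x i \<le> mat_apply n (adj_weight F) x i"
    unfolding mat_apply_def adj_weight_def using assms by (intro sum_mono) simp
qed

lemma sq_norm_subgraph_adjacency_le_spectral_radius:
  assumes sym: "\<And>a b. F a b \<Longrightarrow> F b a" and "0 < n"
    and "\<And>i. 0 \<le> x i" "\<And>i j. G i j \<Longrightarrow> F i j"
  shows "sq_norm n (mat_apply n (adj_weight G) x) \<le> (spectral_radius_graph n F)\<^sup>2 * sq_norm n x"
proof -
  have "sq_norm n (mat_apply n (adj_weight G) x) \<le> sq_norm n (mat_apply n (adj_weight F) x)"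
    using assms(3,4) by (rule sq_norm_mat_apply_adj_weight_mono)
  also have "\<dots> \<le> (spectral_radius_graph n F)\<^sup>2 * sq_norm n x"
    using sq_norm_adjacency_le_spectral_radius(2)[where F = F, OF sym \<open>0 < n\<close>] .
  finally show ?thesis .
qed

definition deg :: "nat \<Rightarrow> (nat \<Rightarrow> nat \<Rightarrow> bool) \<Rightarrow> nat \<Rightarrow> nat" where
  "deg n E u = card {w. w < n \<and> E u w}"

definition is_walk :: "(nat \<Rightarrow> nat \<Rightarrow> bool) \<Rightarrow> nat list \<Rightarrow> bool" where
  "is_walk E p \<longleftrightarrow> (\<forall>i. Suc i < length p \<longrightarrow> E (p ! i) (p ! Suc i))"

lemma hamiltonian_path_iff:
  "hamiltonian_path n E u v p \<longleftrightarrow>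
     p \<noteq> [] \<and> distinct p \<and> set p = {0..<n} \<and> hd p = u \<and> last p = v \<and> is_walk E p"
  unfolding hamiltonian_path_def is_walk_def ..

definition segment_reflection :: "nat \<Rightarrow> nat \<Rightarrow> nat \<Rightarrow> nat" where
  "segment_reflection s t j = (if s \<le> j \<and> j \<le> t then s + t - j else j)"

lemma segment_reflection_permutes:
  assumes "t < L"
  shows "segment_reflection s t permutes {..<L}"
proof (rule bij_imp_permutes)
  have "segment_reflection s t (segment_reflection s t j) = j" for j
    unfolding segment_reflection_def by auto
  moreover have "segment_reflection s t ` {..<L} \<subseteq> {..<L}"
    using assms unfolding segment_reflection_def by auto
  ultimately show "bij_betw (segment_reflection s t) {..<L} {..<L}"
    by (intro bij_betw_byWitness[where f' = "segment_reflection s t"]) auto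
  show "segment_reflection s t j = j" if "j \<notin> {..<L}" for j
    using assms that unfolding segment_reflection_def by auto
qed

lemma is_walk_reverse_segment:
  assumes sym: "\<And>x y. E x y \<Longrightarrow> E y x" and st: "0 < s" "s \<le> t" "Suc t < length p"
    and walk: "\<And>j. Suc j < length p \<Longrightarrow> j \<noteq> s - 1 \<Longrightarrow> j \<noteq> t \<Longrightarrow> E (p ! j) (p ! Suc j)"
    and cross: "E (p ! (s - 1)) (p ! t)" "E (p ! s) (p ! Suc t)"
  shows "is_walk E (permute_list (segment_reflection s t) p)"
  unfolding is_walk_def
proof (intro allI impI)
  define \<sigma> where "\<sigma> = segment_reflection s t"
  fix j assume "Suc j < length (permute_list \<sigma> p)"
  then have "Suc j < length p" by simp
  moreover have "\<sigma> permutes {..<length p}"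
    unfolding \<sigma>_def using st by (intro segment_reflection_permutes) simp
  ultimately have q_j: "permute_list \<sigma> p ! j = p ! \<sigma> j" "permute_list \<sigma> p ! Suc j = p ! \<sigma> (Suc j)"
    by (simp_all add: permute_list_nth)
  consider "Suc j < s \<or> t < j" | "Suc j = s" | "s \<le> j" "j < t" | "j = t" by linarith
  then show "E (permute_list \<sigma> p ! j) (permute_list \<sigma> p ! Suc j)"
  proof cases
    case 1
    then have "\<sigma> j = j" "\<sigma> (Suc j) = Suc j" by (auto simp: \<sigma>_def segment_reflection_def)
    then show ?thesis unfolding q_j using 1 st walk \<open>Suc j < length p\<close> by auto
  next
    case 2
    then have "\<sigma> j = s - 1" "\<sigma> (Suc j) = t" using st by (auto simp: \<sigma>_def segment_reflection_def)
    then show ?thesis unfolding q_j using cross(1) by simp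
  next
    case 3
    define m where "m = s + t - Suc j"
    have "\<sigma> j = Suc m" "\<sigma> (Suc j) = m" "Suc m < length p" "m \<noteq> s - 1" "m \<noteq> t"
      using 3 st unfolding m_def \<sigma>_def segment_reflection_def by auto
    then show ?thesis unfolding q_j using walk[of m] sym by auto
  next
    case 4
    then have "\<sigma> j = s" "\<sigma> (Suc j) = Suc t" using st by (auto simp: \<sigma>_def segment_reflection_def)
    then show ?thesis unfolding q_j using cross(2) by simp
  qed
qed

lemma hamiltonian_path_reverse_segment:
  assumes sym: "\<And>x y. E x y \<Longrightarrow> E y x"
    and p: "distinct p" "set p = {0..<n}" and st: "0 < s" "s \<le> t" "Suc t < length p"
    and walk: "\<And>j. Suc j < length p \<Longrightarrow> j \<noteq> s - 1 \<Longrightarrow> j \<noteq> t \<Longrightarrow> E (p ! j) (p ! Suc j)"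
    and cross: "E (p ! (s - 1)) (p ! t)" "E (p ! s) (p ! Suc t)"
  shows "hamiltonian_path n E (hd p) (last p) (permute_list (segment_reflection s t) p)"
proof -
  define \<sigma> where "\<sigma> = segment_reflection s t"
  define q where "q = permute_list \<sigma> p"
  have perm: "\<sigma> permutes {..<length p}"
    unfolding \<sigma>_def using st by (intro segment_reflection_permutes) simp
  have q_nth: "q ! j = p ! \<sigma> j" if "j < length p" for j
    unfolding q_def using perm that by (rule permute_list_nth)
  have "p \<noteq> []" "q \<noteq> []" using st by (auto simp: q_def permute_list_def)
  moreover have "hd q = hd p"
    using \<open>p \<noteq> []\<close> \<open>q \<noteq> []\<close> q_nth[of 0] st by (simp add: hd_conv_nth \<sigma>_def segment_reflection_def)
  moreover have "last q = last p"
  proof -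
    have "\<sigma> (length p - 1) = length p - 1" using st by (auto simp: \<sigma>_def segment_reflection_def)
    then show ?thesis
      using \<open>p \<noteq> []\<close> \<open>q \<noteq> []\<close> q_nth[of "length p - 1"] by (simp add: last_conv_nth q_def)
  qed
  moreover have "is_walk E q"
    unfolding q_def \<sigma>_def using assms(1,4-) by (rule is_walk_reverse_segment)
  ultimately show ?thesis
    unfolding hamiltonian_path_iff q_def[symmetric] \<sigma>_def[symmetric] using p perm by (simp add: q_def)
qed

lemma exists_consecutive_crossing:
  assumes "T \<subseteq> {..<n}" "S \<subseteq> {..<n}" "k \<notin> T" "Suc k \<notin> S" "Suc k \<le> n"
    and "n < card T + card S"
  shows "\<exists>i\<in>T. Suc i \<in> S"
proof (rule ccontr)
  assume "\<not> (\<exists>i\<in>T. Suc i \<in> S)"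
  then have "Suc ` T \<inter> S = {}" by auto
  moreover have "finite T" "finite S" using assms(1,2) finite_subset by auto
  ultimately have "card T + card S = card (Suc ` T \<union> S)"
    by (simp add: card_Un_disjoint card_image)
  also have "\<dots> \<le> card ({..n} - {Suc k})"
    using assms(1-4) by (intro card_mono) auto
  also have "\<dots> = n" using assms(5) by simp
  finally show False using assms(6) by simp
qed

lemma card_positions:
  assumes "distinct p" "set p = {0..<n}"
  shows "card {i. i < n \<and> P (p ! i)} = card {w. w < n \<and> P w}"
proof -
  have len: "length p = n" using distinct_card[OF assms(1)] assms(2) by simp
  have "(!) p ` {i. i < n \<and> P (p ! i)} = {w. w < n \<and> P w}"
  proof (intro equalityI subsetI)
    fix w assume w: "w \<in> {w. w < n \<and> P w}"
    then have "w \<in> set p" using assms(2) by simp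
    then obtain i where "i < n" "w = p ! i" using len by (auto simp: in_set_conv_nth)
    then show "w \<in> (!) p ` {i. i < n \<and> P (p ! i)}" using w by auto
  qed (use assms(2) len nth_mem in fastforce)
  moreover have "inj_on ((!) p) {i. i < n \<and> P (p ! i)}"
    using assms(1) len by (intro inj_on_nth) auto
  ultimately show ?thesis using card_image by metis
qed

text \<open>Posa rotation: if the only missing edge of a Hamiltonian path joins \<open>p!k\<close> and \<open>p!(k+1)\<close>,
  whose degrees sum to more than \<open>n\<close>, then by pigeonhole some \<open>i\<close> has \<open>p!i\<close> adjacent to \<open>p!k\<close> and
  \<open>p!(i+1)\<close> adjacent to \<open>p!(k+1)\<close>, and reversing the segment between them closes the gap.\<close>
lemma hamiltonian_path_rotation:
  assumes sym: "\<And>x y. E x y \<Longrightarrow> E y x" and irr: "\<And>x. \<not> E x x"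
    and p: "distinct p" "set p = {0..<n}" and k: "Suc k < n"
    and walk: "\<And>j. Suc j < n \<Longrightarrow> j \<noteq> k \<Longrightarrow> E (p ! j) (p ! Suc j)"
    and deg: "n < deg n E (p ! k) + deg n E (p ! Suc k)"
  shows "\<exists>q. hamiltonian_path n E (hd p) (last p) q"
proof -
  have len: "length p = n" using distinct_card[OF p(1)] p(2) by simp
  define T where "T = {i. i < n \<and> E (p ! k) (p ! i)}"
  define S where "S = {i. i < n \<and> E (p ! Suc k) (p ! i)}"
  have "card T = deg n E (p ! k)" "card S = deg n E (p ! Suc k)"
    unfolding T_def S_def deg_def using card_positions[OF p] by blast+
  moreover have "k \<notin> T" "Suc k \<notin> S" using irr by (simp_all add: T_def S_def)
  ultimately obtain i where i: "i \<in> T" "Suc i \<in> S"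
    using exists_consecutive_crossing[of T n S k] deg k by (force simp: T_def S_def)
  then have "i \<noteq> k" using \<open>k \<notin> T\<close> by auto
  then consider "i < k" | "k < i" by linarith
  then show ?thesis
  proof cases
    case 1
    have "hamiltonian_path n E (hd p) (last p) (permute_list (segment_reflection (Suc i) k) p)"
      using i k 1 walk sym
      by (intro hamiltonian_path_reverse_segment[OF sym p]) (auto simp: len T_def S_def)
    then show ?thesis by blast
  next
    case 2
    have "hamiltonian_path n E (hd p) (last p) (permute_list (segment_reflection (Suc k) i) p)"
      using i k 2 walk
      by (intro hamiltonian_path_reverse_segment[OF sym p]) (auto simp: len T_def S_def)
    then show ?thesis by blast
  qed
qed

definition add_edge :: "nat \<Rightarrow> nat \<Rightarrow> (nat \<Rightarrow> nat \<Rightarrow> bool) \<Rightarrow> nat \<Rightarrow> nat \<Rightarrow> bool" where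
  "add_edge u v E x y \<longleftrightarrow> E x y \<or> (x = u \<and> y = v) \<or> (x = v \<and> y = u)"

lemma walk_add_edge_cases:
  assumes walk: "is_walk (add_edge u v E) p" and "distinct p"
  obtains "is_walk E p"
  | k where "Suc k < length p" "(p ! k = u \<and> p ! Suc k = v) \<or> (p ! k = v \<and> p ! Suc k = u)"
      "\<And>j. Suc j < length p \<Longrightarrow> j \<noteq> k \<Longrightarrow> E (p ! j) (p ! Suc j)"
proof (cases "is_walk E p")
  case False
  then obtain k where k: "Suc k < length p" "\<not> E (p ! k) (p ! Suc k)" unfolding is_walk_def by blast
  have new: "(p ! j = u \<and> p ! Suc j = v) \<or> (p ! j = v \<and> p ! Suc j = u)"
    if "Suc j < length p" "\<not> E (p ! j) (p ! Suc j)" for j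
    using walk that unfolding is_walk_def add_edge_def by blast
  have "E (p ! j) (p ! Suc j)" if j: "Suc j < length p" "j \<noteq> k" for j
  proof (rule ccontr)
    assume "\<not> E (p ! j) (p ! Suc j)"
    then have "p ! j = p ! k \<or> (p ! j = p ! Suc k \<and> p ! Suc j = p ! k)"
      using new[OF j(1)] new[OF k] by auto
    then show False
      using j k \<open>distinct p\<close> by (auto simp: nth_eq_iff_index_eq)
  qed
  then show ?thesis using that(2) k new[OF k] by blast
qed

lemma hamilton_connected_of_add_edge:
  assumes "simple_graph n E" and deg: "n < deg n E u + deg n E v"
    and "hamilton_connected n (add_edge u v E)"
  shows "hamilton_connected n E"
  unfolding hamilton_connected_def
proof (intro allI impI)
  fix x y assume "x < n \<and> y < n \<and> x \<noteq> y"
  then obtain p where p: "hamiltonian_path n (add_edge u v E) x y p"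
    using assms(3) unfolding hamilton_connected_def by blast
  then have "distinct p" "set p = {0..<n}" "hd p = x" "last p = y"
    and walk: "is_walk (add_edge u v E) p"
    unfolding hamiltonian_path_iff by auto
  have len: "length p = n" using distinct_card[OF \<open>distinct p\<close>] \<open>set p = {0..<n}\<close> by simp
  have sym: "\<And>a b. E a b \<Longrightarrow> E b a" and irr: "\<And>a. \<not> E a a"
    using assms(1) unfolding simple_graph_def by auto
  from walk \<open>distinct p\<close> show "\<exists>q. hamiltonian_path n E x y q"
  proof (cases rule: walk_add_edge_cases)
    case 1
    then show ?thesis using p unfolding hamiltonian_path_iff by blast
  next
    case (2 k)
    then have "n < deg n E (p ! k) + deg n E (p ! Suc k)" using deg by auto
    then show ?thesis
      using hamiltonian_path_rotation[where E = E, OF sym irr \<open>distinct p\<close> \<open>set p = {0..<n}\<close>] 2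
        \<open>hd p = x\<close> \<open>last p = y\<close> len by auto
  qed
qed

lemma hamilton_connected_complete:
  assumes "\<And>x y. x < n \<Longrightarrow> y < n \<Longrightarrow> x \<noteq> y \<Longrightarrow> E x y"
  shows "hamilton_connected n E"
  unfolding hamilton_connected_def
proof (intro allI impI)
  fix x y assume xy: "x < n \<and> y < n \<and> x \<noteq> y"
  define p where "p = x # filter (\<lambda>w. w \<noteq> x \<and> w \<noteq> y) [0..<n] @ [y]"
  have "distinct p" "set p = {0..<n}" unfolding p_def using xy by auto
  moreover have "is_walk E p"
    unfolding is_walk_def
  proof (intro allI impI)
    fix j assume "Suc j < length p"
    then have "p ! j \<in> set p" "p ! Suc j \<in> set p" "p ! j \<noteq> p ! Suc j"
      using nth_eq_iff_index_eq[OF \<open>distinct p\<close>, of j "Suc j"] by simp_all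
    then show "E (p ! j) (p ! Suc j)" using assms \<open>set p = {0..<n}\<close> by simp
  qed
  moreover have "p \<noteq> []" "hd p = x" "last p = y" by (simp_all add: p_def)
  ultimately show "\<exists>p. hamiltonian_path n E x y p" unfolding hamiltonian_path_iff by blast
qed

definition degree_closed :: "nat \<Rightarrow> nat \<Rightarrow> (nat \<Rightarrow> nat \<Rightarrow> bool) \<Rightarrow> bool" where
  "degree_closed n k H \<longleftrightarrow>
     (\<forall>x y. x < n \<longrightarrow> y < n \<longrightarrow> x \<noteq> y \<longrightarrow> \<not> H x y \<longrightarrow> deg n H x + deg n H y < k)"

lemma exists_degree_closed_supergraph:
  assumes "simple_graph n E" "\<not> P E"
    and step: "\<And>G u v. simple_graph n G \<Longrightarrow> u < n \<Longrightarrow> v < n \<Longrightarrow> u \<noteq> v \<Longrightarrow> \<not> G u v \<Longrightarrow>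
      k \<le> deg n G u + deg n G v \<Longrightarrow> P (add_edge u v G) \<Longrightarrow> P G"
  obtains H where "simple_graph n H" "\<And>x y. E x y \<Longrightarrow> H x y" "\<not> P H" "degree_closed n k H"
proof -
  define non_edges where "non_edges G = {(x, y). x < n \<and> y < n \<and> x \<noteq> y \<and> \<not> G x y}" for G
  have "\<exists>H. simple_graph n H \<and> (\<forall>x y. G x y \<longrightarrow> H x y) \<and> \<not> P H \<and> degree_closed n k H"
    if "simple_graph n G" "\<not> P G" for G
    using that
  proof (induction "card (non_edges G)" arbitrary: G rule: less_induct)
    case less
    show ?case
    proof (cases "degree_closed n k G")
      case True
      then show ?thesis using less.prems by blast
    next
      case False
      then obtain u v where uv: "u < n" "v < n" "u \<noteq> v" "\<not> G u v" "k \<le> deg n G u + deg n G v"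
        unfolding degree_closed_def by (auto simp: not_less)
      have "simple_graph n (add_edge u v G)"
        using less.prems(1) uv unfolding simple_graph_def add_edge_def by auto
      moreover have "\<not> P (add_edge u v G)" using step[OF less.prems(1) uv] less.prems(2) by blast
      moreover have "non_edges (add_edge u v G) \<subset> non_edges G"
        using uv unfolding non_edges_def add_edge_def by auto
      then have "card (non_edges (add_edge u v G)) < card (non_edges G)"
        by (rule psubset_card_mono[rotated])
          (rule finite_subset[of _ "{..<n} \<times> {..<n}"], auto simp: non_edges_def)
      ultimately obtain H where "simple_graph n H" "\<forall>x y. add_edge u v G x y \<longrightarrow> H x y"
          "\<not> P H" "degree_closed n k H"
        using less.hyps by blast
      then show ?thesis unfolding add_edge_def by blast
    qed
  qed
  then show ?thesis using assms(1,2) that by blast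
qed

lemma simple_graph_complement: "simple_graph n E \<Longrightarrow> simple_graph n (complement n E)"
  unfolding simple_graph_def complement_def by blast

lemma deg_add_deg_complement:
  assumes "simple_graph n H" "x < n"
  shows "deg n H x + deg n (complement n H) x = n - 1"
proof -
  have "{w. w < n \<and> H x w} \<union> {w. w < n \<and> complement n H x w} = {..<n} - {x}"
    using assms unfolding simple_graph_def complement_def by auto
  moreover have "{w. w < n \<and> H x w} \<inter> {w. w < n \<and> complement n H x w} = {}"
    unfolding complement_def by auto
  ultimately show ?thesis
    unfolding deg_def using assms(2) by (simp flip: card_Un_disjoint)
qed

lemma complement_edge_deg_sum:
  assumes H: "simple_graph n H" "degree_closed n (Suc n) H" and "complement n H x y"
  shows "n \<le> deg n (complement n H) x + deg n (complement n H) y + 2"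
proof -
  have "x < n" "y < n" "x \<noteq> y" "\<not> H x y" using \<open>complement n H x y\<close> by (auto simp: complement_def)
  then have "deg n H x + deg n H y < Suc n" using H(2) unfolding degree_closed_def by blast
  then show ?thesis
    using deg_add_deg_complement[OF H(1) \<open>x < n\<close>] deg_add_deg_complement[OF H(1) \<open>y < n\<close>] by linarith
qed

lemma sum_adj_weight: "(\<Sum>j<n. adj_weight F i j) = real (deg n F i)"
  unfolding adj_weight_def deg_def using sum.inter_filter[of "{..<n}" "\<lambda>_. 1 :: real" "F i"] by simp

text \<open>Double counting over edges: \<open>\<Sum>\<^sub>i d\<^sub>i\<^sup>2 = \<Sum>\<^sub>i\<^sub>j A\<^sub>i\<^sub>j d\<^sub>i\<close>.\<close>
lemma sum_sq_deg_lower_bound: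
  assumes sym: "\<And>x y. F x y \<Longrightarrow> F y x"
    and edge: "\<And>x y. F x y \<Longrightarrow> c \<le> real (deg n F x) + real (deg n F y)"
  shows "c * (\<Sum>i<n. real (deg n F i)) \<le> 2 * (\<Sum>i<n. (real (deg n F i))\<^sup>2)"
proof -
  define b where "b = adj_weight F"
  define d where "d i = real (deg n F i)" for i
  have d: "d i = (\<Sum>j<n. b i j)" for i unfolding b_def d_def by (simp add: sum_adj_weight)
  have bsym: "b i j = b j i" for i j unfolding b_def adj_weight_def using sym by auto
  have row: "(\<Sum>i<n. \<Sum>j<n. b i j * d i) = (\<Sum>i<n. (d i)\<^sup>2)"
    by (simp add: d power2_eq_square sum_distrib_right)
  have col: "(\<Sum>i<n. \<Sum>j<n. b i j * d j) = (\<Sum>i<n. (d i)\<^sup>2)"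
    by (subst sum.swap) (simp add: bsym[of _ "_::nat"] d power2_eq_square sum_distrib_right)
  have "c * (\<Sum>i<n. d i) = (\<Sum>i<n. \<Sum>j<n. b i j * c)"
    by (simp add: d sum_distrib_left mult.commute)
  also have "\<dots> \<le> (\<Sum>i<n. \<Sum>j<n. b i j * d i + b i j * d j)"
    using edge unfolding b_def adj_weight_def d_def by (intro sum_mono) (simp add: distrib_left)
  also have "\<dots> = 2 * (\<Sum>i<n. (d i)\<^sup>2)" by (simp add: sum.distrib row col)
  finally show ?thesis unfolding d_def .
qed

lemma sum_deg_split:
  assumes F: "simple_graph n F" and "u < n" "v < n" "u \<noteq> v"
  shows "(\<Sum>i<n. deg n F i) = deg n F u + deg n F v + (\<Sum>i<n. card ({w. w < n \<and> F i w} - {u, v}))"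
proof -
  have sym: "F x y \<longleftrightarrow> F y x" for x y using F unfolding simple_graph_def by blast
  have "deg n F i = of_bool (F i u) + of_bool (F i v) + card ({w. w < n \<and> F i w} - {u, v})" for i
  proof -
    have "{w. w < n \<and> F i w} \<inter> {u, v} = {w. w = u \<and> F i u} \<union> {w. w = v \<and> F i v}"
      using assms(2-3) by auto
    then have "card ({w. w < n \<and> F i w} \<inter> {u, v}) = of_bool (F i u) + of_bool (F i v)"
      using \<open>u \<noteq> v\<close> by (auto simp: card_Un_disjoint)
    then show ?thesis unfolding deg_def by (subst card_Int_Diff[where B = "{u, v}"]) auto
  qed
  moreover have "(\<Sum>i<n. of_bool (F i w)) = deg n F w" for w
    unfolding deg_def by (simp add: Int_def sym[of w])
  ultimately show ?thesis by (simp add: sum.distrib)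
qed

text \<open>Splitting each degree as \<open>|N(i) \<inter> {u, v}| + |N(i) - {u, v}|\<close>, the first parts sum to
  \<open>d(u) + d(v)\<close>, the vertices \<open>u, v\<close> contribute \<open>d(u) - 1\<close> and \<open>d(v) - 1\<close> to the second, and an edge \<open>wz\<close>
  with \<open>w\<close> outside \<open>N(u) \<union> N(v)\<close> contributes two more.\<close>
lemma sum_deg_lower_bounds:
  assumes F: "simple_graph n F" and "F u v"
  shows "2 * (deg n F u + deg n F v) \<le> (\<Sum>i<n. deg n F i) + 2"
    and "F w z \<Longrightarrow> \<not> F w u \<Longrightarrow> \<not> F w v \<Longrightarrow> 2 * (deg n F u + deg n F v) \<le> (\<Sum>i<n. deg n F i)"
proof -
  define ex where "ex i = card ({w. w < n \<and> F i w} - {u, v})" for i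
  have sym: "\<And>x y. F x y \<Longrightarrow> F y x" and irr: "\<And>x. \<not> F x x"
    and bound: "\<And>x y. F x y \<Longrightarrow> x < n \<and> y < n" using F unfolding simple_graph_def by auto
  have uv: "u < n" "v < n" "u \<noteq> v" using bound irr \<open>F u v\<close> by blast+
  have D: "(\<Sum>i<n. deg n F i) = deg n F u + deg n F v + (\<Sum>i<n. ex i)"
    unfolding ex_def using sum_deg_split[OF F uv] .
  have ex_endpoint: "ex i = deg n F i - 1" if "i = u \<and> j = v \<or> i = v \<and> j = u" for i j
  proof -
    have "{w. w < n \<and> F i w} - {u, v} = {w. w < n \<and> F i w} - {j}" using that irr by auto
    moreover have "j \<in> {w. w < n \<and> F i w}" using that \<open>F u v\<close> sym bound by auto
    ultimately show ?thesis unfolding ex_def deg_def by (simp add: card_Diff_singleton)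
  qed
  have ex_uv: "ex u = deg n F u - 1" "ex v = deg n F v - 1" using ex_endpoint by blast+
  have deg_uv: "deg n F u \<ge> 1" "deg n F v \<ge> 1"
    unfolding deg_def using \<open>F u v\<close> sym[OF \<open>F u v\<close>] uv by (auto simp: Suc_le_eq card_gt_0_iff)
  have "ex u + ex v \<le> (\<Sum>i<n. ex i)"
    using sum_mono2[of "{..<n}" "{u, v}" ex] uv by simp
  with ex_uv deg_uv show "2 * (deg n F u + deg n F v) \<le> (\<Sum>i<n. deg n F i) + 2"
    unfolding D by arith
  assume "F w z" "\<not> F w u" "\<not> F w v"
  then have wz: "w \<notin> {u, v}" "z \<notin> {u, v}" "w \<noteq> z" using \<open>F u v\<close> sym irr by auto
  have "1 \<le> ex w" "1 \<le> ex z"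
    unfolding ex_def using \<open>F w z\<close> sym[OF \<open>F w z\<close>] bound[OF \<open>F w z\<close>] wz
    by (auto simp: Suc_le_eq card_gt_0_iff)
  moreover have "ex u + ex v + ex w + ex z \<le> (\<Sum>i<n. ex i)"
    using sum_mono2[of "{..<n}" "{u, v, w, z}" ex] uv wz bound[OF \<open>F w z\<close>] by simp
  ultimately show "2 * (deg n F u + deg n F v) \<le> (\<Sum>i<n. deg n F i)"
    using ex_uv deg_uv unfolding D by arith
qed

text \<open>Either \<open>F\<close> has at least \<open>n - 2\<close> edges, or every non-isolated vertex lies in \<open>N(u) \<union> N(v)\<close>,
  which then has at most \<open>n - 2\<close> vertices.\<close>
lemma card_non_isolated_bound:
  assumes F: "simple_graph n F" and "4 \<le> n" and "F u v"
    and edge: "\<And>x y. F x y \<Longrightarrow> n \<le> deg n F x + deg n F y + 2"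
  shows "2 * (n - 2) * card {i. i < n \<and> (\<exists>j. F i j)} \<le> n * (\<Sum>i<n. deg n F i)"
proof -
  define V where "V = {i. i < n \<and> (\<exists>j. F i j)}"
  define D where "D = (\<Sum>i<n. deg n F i)"
  have sym: "\<And>x y. F x y \<Longrightarrow> F y x" using F unfolding simple_graph_def by blast
  have D_lower: "2 * (deg n F u + deg n F v) \<le> D + 2"
    unfolding D_def using sum_deg_lower_bounds(1)[OF F \<open>F u v\<close>] .
  show ?thesis
  proof (cases "2 * n \<le> D + 4")
    case True
    have "card V \<le> n" unfolding V_def using card_mono[of "{..<n}" V] by (auto simp: V_def)
    then have "2 * (n - 2) * card V \<le> 2 * (n - 2) * n" by simp
    also have "\<dots> \<le> D * n" using True by (intro mult_right_mono) auto
    also have "\<dots> = n * D" by simp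
    finally show ?thesis unfolding V_def D_def .
  next
    case False
    have "V \<subseteq> {w. w < n \<and> F u w} \<union> {w. w < n \<and> F v w}"
    proof
      fix w assume "w \<in> V"
      then obtain z where "F w z" "w < n" unfolding V_def by blast
      have "\<not> 2 * (deg n F u + deg n F v) \<le> D" using False edge[OF \<open>F u v\<close>] by (simp add: not_le)
      then have "F w u \<or> F w v"
        using sum_deg_lower_bounds(2)[OF F \<open>F u v\<close> \<open>F w z\<close>] unfolding D_def by blast
      then show "w \<in> {w. w < n \<and> F u w} \<union> {w. w < n \<and> F v w}" using \<open>w < n\<close> sym by auto
    qed
    then have "card V \<le> card ({w. w < n \<and> F u w} \<union> {w. w < n \<and> F v w})"
      by (intro card_mono) auto
    also have "\<dots> \<le> deg n F u + deg n F v" unfolding deg_def by (rule card_Un_le)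
    finally have "card V + 2 \<le> n" using False D_lower by (simp add: not_le)
    then have "2 * (n - 2) * card V \<le> 2 * (n - 2) * (n - 2)" by (intro mult_left_mono) auto
    also have "\<dots> \<le> n * (2 * n - 6)"
    proof -
      define m where "m = n - 4"
      then have "n = m + 4" using \<open>4 \<le> n\<close> by simp
      then show ?thesis by (simp add: algebra_simps)
    qed
    also have "\<dots> \<le> n * D" using D_lower edge[OF \<open>F u v\<close>] by (intro mult_left_mono) auto
    finally show ?thesis unfolding V_def D_def .
  qed
qed

lemma sq_mult_le_chain:
  fixes N c D S :: real
  assumes "(N - 2) * D \<le> 2 * S" "2 * (N - 2) * c \<le> N * D" "2 \<le> N"
  shows "(N - 2)\<^sup>2 * c \<le> N * S"
proof -
  have "2 * ((N - 2)\<^sup>2 * c) = (N - 2) * (2 * (N - 2) * c)" by (simp add: power2_eq_square)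
  also have "\<dots> \<le> (N - 2) * (N * D)" using assms(2,3) by (intro mult_left_mono) auto
  also have "\<dots> = N * ((N - 2) * D)" by simp
  also have "\<dots> \<le> N * (2 * S)" using assms(1,3) by (intro mult_left_mono) auto
  finally show ?thesis by simp
qed

lemma mat_apply_adj_weight_indicator:
  assumes "\<And>j. F i j \<Longrightarrow> j \<in> V"
  shows "mat_apply n (adj_weight F) (\<lambda>j. if j \<in> V then 1 else 0) i = real (deg n F i)"
proof -
  have "adj_weight F i j * (if j \<in> V then 1 else 0) = adj_weight F i j" for j
    using assms by (simp add: adj_weight_def)
  then show ?thesis unfolding mat_apply_def by (simp only: sum_adj_weight)
qed

lemma sq_norm_indicator:
  assumes "V \<subseteq> {..<n}"
  shows "sq_norm n (\<lambda>i. if i \<in> V then 1 else 0) = real (card V)"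
proof -
  have "(if i \<in> V then 1 else 0)\<^sup>2 = (of_bool (i \<in> V) :: real)" for i by simp
  then have "sq_norm n (\<lambda>i. if i \<in> V then 1 else 0) = (\<Sum>i<n. of_bool (i \<in> V))"
    unfolding sq_norm_def by (simp only:)
  also have "\<dots> = real (card ({..<n} \<inter> {i. i \<in> V}))" by (rule sum_of_bool_eq) simp_all
  also have "{..<n} \<inter> {i. i \<in> V} = V" using assms by auto
  finally show ?thesis .
qed

lemma exists_test_vector:
  assumes F: "simple_graph n F" and "4 \<le> n" and "F u v"
    and edge: "\<And>x y. F x y \<Longrightarrow> n \<le> deg n F x + deg n F y + 2"
  obtains x where "\<And>i. 0 \<le> x i" "0 < sq_norm n x"
    "(real n - 2)\<^sup>2 * sq_norm n x \<le> real n * sq_norm n (mat_apply n (adj_weight F) x)"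
proof -
  define V where "V = {i. i < n \<and> (\<exists>j. F i j)}"
  define x where "x i = (if i \<in> V then 1 else 0 :: real)" for i
  define d where "d i = real (deg n F i)" for i
  have sym: "\<And>x y. F x y \<Longrightarrow> F y x" and bound: "\<And>x y. F x y \<Longrightarrow> x < n \<and> y < n"
    using F unfolding simple_graph_def by auto
  have Ax: "mat_apply n (adj_weight F) x i = d i" for i
    unfolding x_def d_def using sym bound by (intro mat_apply_adj_weight_indicator) (auto simp: V_def)
  have nx: "sq_norm n x = real (card V)" unfolding x_def by (rule sq_norm_indicator) (auto simp: V_def)
  have "u \<in> V" using \<open>F u v\<close> bound unfolding V_def by blast
  moreover have "finite V" unfolding V_def by simp
  ultimately have "0 < card V" using card_gt_0_iff by blast
  have "(real n - 2) * (\<Sum>i<n. d i) \<le> 2 * (\<Sum>i<n. (d i)\<^sup>2)"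
    unfolding d_def
  proof (rule sum_sq_deg_lower_bound[where F = F, OF sym])
    fix a b assume "F a b"
    then have "real n \<le> real (deg n F a + deg n F b + 2)" using edge of_nat_mono by blast
    then show "real n - 2 \<le> real (deg n F a) + real (deg n F b)" by simp
  qed
  moreover have "real (2 * (n - 2) * card V) \<le> real (n * (\<Sum>i<n. deg n F i))"
    using card_non_isolated_bound[OF assms] unfolding V_def of_nat_le_iff .
  then have "2 * (real n - 2) * real (card V) \<le> real n * (\<Sum>i<n. d i)"
    using \<open>4 \<le> n\<close> by (simp add: d_def of_nat_diff)
  ultimately have "(real n - 2)\<^sup>2 * real (card V) \<le> real n * (\<Sum>i<n. (d i)\<^sup>2)"
    by (rule sq_mult_le_chain) (use \<open>4 \<le> n\<close> in simp)
  moreover have "sq_norm n (mat_apply n (adj_weight F) x) = (\<Sum>i<n. (d i)\<^sup>2)"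
    unfolding sq_norm_def Ax ..
  ultimately show ?thesis
    using that[of x] \<open>0 < card V\<close> unfolding nx by (simp add: x_def)
qed

theorem theorem3p2:
  fixes n :: nat and E :: "nat \<Rightarrow> nat \<Rightarrow> bool"
  assumes "simple_graph n E"
    and "n \<ge> 4"
    and "spectral_radius_graph n (complement n E) < sqrt ((real n - 2)^2 / real n)"
  shows "hamilton_connected n E"
proof (rule ccontr)
  assume "\<not> hamilton_connected n E"
  then obtain H where H: "simple_graph n H" "\<And>x y. E x y \<Longrightarrow> H x y" "\<not> hamilton_connected n H"
      "degree_closed n (Suc n) H"
    using exists_degree_closed_supergraph[OF assms(1), where k = "Suc n"]
      hamilton_connected_of_add_edge by (metis Suc_le_eq)
  then obtain u v where "complement n H u v"
    using hamilton_connected_complete[of n H] unfolding complement_def by blast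
  then obtain x where x: "\<And>i. 0 \<le> x i" "0 < sq_norm n x"
      "(real n - 2)\<^sup>2 * sq_norm n x \<le> real n * sq_norm n (mat_apply n (adj_weight (complement n H)) x)"
    using exists_test_vector[OF simple_graph_complement[OF H(1)] \<open>4 \<le> n\<close>]
      complement_edge_deg_sum[OF H(1,4)] by blast
  define \<mu> where "\<mu> = spectral_radius_graph n (complement n E)"
  have sym: "\<And>a b. complement n E a b \<Longrightarrow> complement n E b a"
    using assms(1) unfolding simple_graph_def complement_def by blast
  have "0 < n" using \<open>4 \<le> n\<close> by simp
  have sub: "\<And>a b. complement n H a b \<Longrightarrow> complement n E a b"
    using H(2) unfolding complement_def by blast
  have "sq_norm n (mat_apply n (adj_weight (complement n H)) x) \<le> \<mu>\<^sup>2 * sq_norm n x"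
    unfolding \<mu>_def
    using sq_norm_subgraph_adjacency_le_spectral_radius[where F = "complement n E", OF sym \<open>0 < n\<close> x(1) sub] .
  with x(2,3) have "(real n - 2)\<^sup>2 \<le> real n * \<mu>\<^sup>2"
    by (smt (verit) mult.assoc mult_le_cancel_right_pos mult_left_mono of_nat_0_le_iff)
  moreover have "0 \<le> \<mu>"
    unfolding \<mu>_def using sq_norm_adjacency_le_spectral_radius(1)[where F = "complement n E", OF sym \<open>0 < n\<close>] .
  ultimately have "sqrt ((real n - 2)\<^sup>2 / real n) \<le> \<mu>"
    using \<open>4 \<le> n\<close> by (intro real_le_lsqrt) (auto simp: divide_le_eq mult.commute)
  then show False using assms(3) unfolding \<mu>_def by simp
qed

end
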